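(* Let $d\ge 2$, let $H$ be a $d$-regular graph on vertex set $[h]$, and let $G$ be any $n$-lift of $H$. Then \[\lambda^*(G)\le 96\sup_{x\in Z}|\langle x,x\rangle_{N,E^*}|+480\sqrt{d}.\]
   Context: An $n$-lift $G$ of $H$ has vertex set $\{(i,j): i\in[h], j\in[n]\}$ with fibres $V_i=\{(i,j):j\in[n]\}$; for each edge $ii'$ of $H$ there is a perfect matching between $V_i$ and $V_{i'}$, and these are the only edges. $M$ is the adjacency matrix of $G$; $\overline{M}_{(i,j),(i',j')}=1/n$ if $ii'\in E(H)$ and $0$ otherwise; $N=M-\overline{M}$. The new eigenvalues of $G$ are the eigenvalues of $M$ on the subspace of vectors with $\sum_{v\in V_i}x_v=0$ for all $i$; $\lambda^*(G)$ is the largest absolute value of a new eigenvalue. For a matrix $A$, vectors $x,y$ and $E\subseteq\mathbb{R}^2$, $\langle x,y\rangle_{A,E}=\sum_{u,v:(x_u,y_v)\in E}x_uA_{uv}y_v$. Let $D^{+}=\{0\}\cup\{2^k/\sqrt{nh}:k\in\mathbb{Z},k\ge 0\}$, $E^*=\{(x_1,x_2)\in\mathbb{R}^2:x_1,x_2>0,\ x_1/x_2\in(d^{-1/2},d^{1/2})\}$, and \[Z=\Big\{x\in\mathbb{R}^{V(G)}:\|x\|_2^2\le 10,\ x_v\in D^+\ \forall v,\ \sup_v x_v\le d\cdot\inf_{v:x_v\ne0}x_v\Big\}.\] *)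

theory Defs
  imports Complex_Main
begin

definition d_regular_graph :: "nat \<Rightarrow> nat \<Rightarrow> (nat \<Rightarrow> nat \<Rightarrow> bool) \<Rightarrow> bool" where
  "d_regular_graph h d E \<longleftrightarrow>
     (\<forall>i i'. E i i' \<longrightarrow> i < h \<and> i' < h) \<and>
     (\<forall>i i'. E i i' \<longrightarrow> E i' i) \<and>
     (\<forall>i. \<not> E i i) \<and>
     (\<forall>i<h. card {i'. i' < h \<and> E i i'} = d)"

definition lift_vertices :: "nat \<Rightarrow> nat \<Rightarrow> (nat \<times> nat) set" where
  "lift_vertices h n = {0..<h} \<times> {0..<n}"

definition fibre :: "nat \<Rightarrow> nat \<Rightarrow> (nat \<times> nat) set" where
  "fibre n i = {i} \<times> {0..<n}"

text \<open>G (adjacency relation on pairs) is an n-lift of H: for each edge ii' of H the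
  edges between V_i and V_i' form a perfect matching, and there are no other edges.\<close>
definition is_lift :: "nat \<Rightarrow> nat \<Rightarrow> (nat \<Rightarrow> nat \<Rightarrow> bool)
                       \<Rightarrow> (nat \<times> nat \<Rightarrow> nat \<times> nat \<Rightarrow> bool) \<Rightarrow> bool" where
  "is_lift h n E G \<longleftrightarrow>
     (\<forall>u v. G u v \<longrightarrow> u \<in> lift_vertices h n \<and> v \<in> lift_vertices h n) \<and>
     (\<forall>u v. G u v \<longrightarrow> G v u) \<and>
     (\<forall>i j i' j'. G (i, j) (i', j') \<longrightarrow> E i i') \<and>
     (\<forall>i i'. E i i' \<longrightarrow> (\<forall>j<n. \<exists>!j'. j' < n \<and> G (i, j) (i', j')))"

definition adjM :: "(nat \<times> nat \<Rightarrow> nat \<times> nat \<Rightarrow> bool) \<Rightarrow> nat \<times> nat \<Rightarrow> nat \<times> nat \<Rightarrow> real" where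
  "adjM G u v = (if G u v then 1 else 0)"

definition Mbar :: "nat \<Rightarrow> (nat \<Rightarrow> nat \<Rightarrow> bool) \<Rightarrow> nat \<times> nat \<Rightarrow> nat \<times> nat \<Rightarrow> real" where
  "Mbar n E u v = (if E (fst u) (fst v) then 1 / real n else 0)"

definition Nmat :: "nat \<Rightarrow> (nat \<Rightarrow> nat \<Rightarrow> bool) \<Rightarrow> (nat \<times> nat \<Rightarrow> nat \<times> nat \<Rightarrow> bool)
                    \<Rightarrow> nat \<times> nat \<Rightarrow> nat \<times> nat \<Rightarrow> real" where
  "Nmat n E G u v = adjM G u v - Mbar n E u v"

definition mat_vec :: "(nat \<times> nat) set \<Rightarrow> (nat \<times> nat \<Rightarrow> nat \<times> nat \<Rightarrow> real)
                       \<Rightarrow> (nat \<times> nat \<Rightarrow> real) \<Rightarrow> nat \<times> nat \<Rightarrow> real" where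
  "mat_vec V A x u = (\<Sum>v\<in>V. A u v * x v)"

definition new_space :: "nat \<Rightarrow> nat \<Rightarrow> (nat \<times> nat \<Rightarrow> real) set" where
  "new_space h n = {x. (\<forall>v. v \<notin> lift_vertices h n \<longrightarrow> x v = 0) \<and>
                        (\<forall>i<h. (\<Sum>v\<in>fibre n i. x v) = 0)}"

definition new_eigenvalues :: "nat \<Rightarrow> nat \<Rightarrow> (nat \<times> nat \<Rightarrow> nat \<times> nat \<Rightarrow> bool) \<Rightarrow> real set" where
  "new_eigenvalues h n G = {lam. \<exists>x\<in>new_space h n. (\<exists>v. x v \<noteq> 0) \<and>
       (\<forall>u\<in>lift_vertices h n. mat_vec (lift_vertices h n) (adjM G) x u = lam * x u)}"

definition lambda_star :: "nat \<Rightarrow> nat \<Rightarrow> (nat \<times> nat \<Rightarrow> nat \<times> nat \<Rightarrow> bool) \<Rightarrow> real" where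
  "lambda_star h n G = Sup (insert 0 (abs ` new_eigenvalues h n G))"

definition restricted_form :: "(nat \<times> nat) set \<Rightarrow> (nat \<times> nat \<Rightarrow> nat \<times> nat \<Rightarrow> real)
     \<Rightarrow> (real \<times> real) set \<Rightarrow> (nat \<times> nat \<Rightarrow> real) \<Rightarrow> (nat \<times> nat \<Rightarrow> real) \<Rightarrow> real" where
  "restricted_form V A Es x y =
     (\<Sum>(u, v)\<in>{(u, v). u \<in> V \<and> v \<in> V \<and> (x u, y v) \<in> Es}. x u * A u v * y v)"

definition Dplus :: "nat \<Rightarrow> nat \<Rightarrow> real set" where
  "Dplus h n = {0} \<union> {2 ^ k / sqrt (real n * real h) | k. True}"

definition Estar :: "nat \<Rightarrow> (real \<times> real) set" where
  "Estar d = {(x1, x2). x1 > 0 \<and> x2 > 0 \<and>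
                1 / sqrt (real d) < x1 / x2 \<and> x1 / x2 < sqrt (real d)}"

text \<open>The set Z of vectors on V(G).  The condition sup_v x_v <= d * inf_{x_v <> 0} x_v is
  written pointwise (vacuous for x = 0).\<close>
definition Zset :: "nat \<Rightarrow> nat \<Rightarrow> nat \<Rightarrow> (nat \<times> nat \<Rightarrow> real) set" where
  "Zset h n d = {x. (\<forall>v. v \<notin> lift_vertices h n \<longrightarrow> x v = 0) \<and>
       (\<Sum>v\<in>lift_vertices h n. (x v)\<^sup>2) \<le> 10 \<and>
       (\<forall>v\<in>lift_vertices h n. x v \<in> Dplus h n) \<and>
       (\<forall>u\<in>lift_vertices h n. \<forall>v\<in>lift_vertices h n. x v \<noteq> 0 \<longrightarrow> x u \<le> real d * x v)}"

end

theory Submission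
  imports Defs
begin

(*
  The proof works for any symmetric matrix A on V = V(G) with absolute row sums at most 2d
  (N = M - Mbar is one) and any bound S on |<x,x>_{A,E*}| over Z.  Let mu be the best
  constant in |z^T A z| <= mu |z|^2 and x a near-extremal vector with |x|^2 = 5/2.
   - Rounding |x_v| up to the dyadic grid 2^k / sqrt(nh) yields a close vector y.
   - y^T A y splits into a far part (pairs of incomparable size; at most 4 sqrt d |y|^2 by
     a Schur test) and E*-restricted forms of the positive part, negative part and |y|.
   - Covering the levels by overlapping windows of width about log_4 d writes each
     restricted form through vectors with entries within a factor d; rescaled, these lie
     in Z, which gives the bound (6/5) S |y|^2.
   - A perturbation argument transfers the bound from y back to mu, so
     mu <= 18/5 (4 sqrt d + 18/5 S).
  Since N x = lambda x on new eigenvectors, lambda^*(G) <= mu <= 96 S + 480 sqrt d.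
*)

definition bilin :: "'a set \<Rightarrow> ('a \<Rightarrow> 'a \<Rightarrow> real) \<Rightarrow> ('a \<Rightarrow> real) \<Rightarrow> ('a \<Rightarrow> real) \<Rightarrow> real" where
  "bilin V A z w = (\<Sum>u\<in>V. \<Sum>v\<in>V. z u * A u v * w v)"

definition sqnorm :: "'a set \<Rightarrow> ('a \<Rightarrow> real) \<Rightarrow> real" where
  "sqnorm V z = (\<Sum>v\<in>V. (z v)^2)"

definition dotp :: "'a set \<Rightarrow> ('a \<Rightarrow> real) \<Rightarrow> ('a \<Rightarrow> real) \<Rightarrow> real" where
  "dotp V z w = (\<Sum>v\<in>V. z v * w v)"

lemma bilin_pair_sum: "bilin V A z w = (\<Sum>p\<in>V\<times>V. z (fst p) * A (fst p) (snd p) * w (snd p))"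
  unfolding bilin_def by (simp add: sum.cartesian_product case_prod_beta)

lemma restricted_form_pair_sum:
  assumes "finite V"
  shows "restricted_form V A Es x y =
    (\<Sum>p\<in>V\<times>V. if (x (fst p), y (snd p)) \<in> Es then x (fst p) * A (fst p) (snd p) * y (snd p) else 0)"
proof -
  have "{(u, v). u \<in> V \<and> v \<in> V \<and> (x u, y v) \<in> Es} = {p\<in>V\<times>V. (x (fst p), y (snd p)) \<in> Es}"
    by auto
  then show ?thesis
    unfolding restricted_form_def using assms by (simp add: sum.inter_filter[symmetric] case_prod_beta)
qed

lemma sqnorm_nonneg: "sqnorm V z \<ge> 0"
  unfolding sqnorm_def by (simp add: sum_nonneg)

lemma sqnorm_eq_0D: "finite V \<Longrightarrow> sqnorm V z = 0 \<Longrightarrow> v \<in> V \<Longrightarrow> z v = 0"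
  unfolding sqnorm_def by (subst (asm) sum_nonneg_eq_0_iff) auto

lemma bilin_eq_0_if_sqnorm_0:
  assumes "finite V" and "sqnorm V z = 0"
  shows "bilin V A z z = 0"
  unfolding bilin_def using sqnorm_eq_0D[OF assms] by simp

lemma bilin_commute:
  assumes "\<And>u v. A u v = A v u"
  shows "bilin V A z w = bilin V A w z"
  unfolding bilin_def by (subst sum.swap) (simp add: assms mult.commute mult.left_commute)

lemma bilin_linear_left: "bilin V A (\<lambda>v. w1 v + s * w2 v) z = bilin V A w1 z + s * bilin V A w2 z"
  unfolding bilin_def by (simp add: algebra_simps sum.distrib sum_distrib_left)

lemma bilin_linear_right: "bilin V A z (\<lambda>v. w1 v + s * w2 v) = bilin V A z w1 + s * bilin V A z w2"
  unfolding bilin_def by (simp add: algebra_simps sum.distrib sum_distrib_left)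

lemma bilin_expand:
  assumes "\<And>u v. A u v = A v u"
  shows "bilin V A (\<lambda>v. x v + s * r v) (\<lambda>v. x v + s * r v)
       = bilin V A x x + 2 * s * bilin V A x r + s^2 * bilin V A r r"
  using bilin_commute[OF assms, where V=V and z=r and w=x]
  by (simp add: bilin_linear_left bilin_linear_right algebra_simps power2_eq_square)

lemma sqnorm_expand:
  "sqnorm V (\<lambda>v. x v + s * r v) = sqnorm V x + 2 * s * dotp V x r + s^2 * sqnorm V r"
  unfolding sqnorm_def dotp_def
  by (simp add: algebra_simps power2_eq_square sum.distrib sum_distrib_left)

lemma bilin_scale: "bilin V A (\<lambda>v. c * z v) (\<lambda>v. c * z v) = c^2 * bilin V A z z"
  unfolding bilin_def by (simp add: sum_distrib_left power2_eq_square algebra_simps)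

lemma sqnorm_scale: "sqnorm V (\<lambda>v. c * z v) = c^2 * sqnorm V z"
  unfolding sqnorm_def by (simp add: sum_distrib_left power_mult_distrib)

lemma bilin_uminus: "bilin V (\<lambda>u v. - A u v) x x = - bilin V A x x"
  unfolding bilin_def by (simp add: sum_negf)

lemma restricted_form_uminus:
  "restricted_form V (\<lambda>u v. - A u v) Es x x = - restricted_form V A Es x x"
  unfolding restricted_form_def by (simp add: sum_negf case_prod_beta)

lemma schur_pair_sum:
  assumes sym: "\<And>u v. A u v = A v u"
    and row: "\<And>u. u \<in> V \<Longrightarrow> (\<Sum>v\<in>V. \<bar>A u v\<bar>) \<le> c"
  shows "(\<Sum>p\<in>V\<times>V. \<bar>A (fst p) (snd p)\<bar> * ((z (fst p))^2 + (z (snd p))^2)) \<le> 2 * c * sqnorm V z"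
proof -
  have half: "(\<Sum>u\<in>V. \<Sum>v\<in>V. \<bar>A u v\<bar> * (z u)^2) \<le> c * sqnorm V z"
  proof -
    have "(\<Sum>u\<in>V. \<Sum>v\<in>V. \<bar>A u v\<bar> * (z u)^2) = (\<Sum>u\<in>V. (z u)^2 * (\<Sum>v\<in>V. \<bar>A u v\<bar>))"
      by (simp add: sum_distrib_left mult.commute)
    also have "\<dots> \<le> (\<Sum>u\<in>V. (z u)^2 * c)"
      by (rule sum_mono) (simp add: mult_left_mono row)
    also have "\<dots> = c * sqnorm V z"
      unfolding sqnorm_def by (simp add: sum_distrib_left mult.commute)
    finally show ?thesis .
  qed
  have swap: "(\<Sum>u\<in>V. \<Sum>v\<in>V. \<bar>A u v\<bar> * (z v)^2) = (\<Sum>u\<in>V. \<Sum>v\<in>V. \<bar>A u v\<bar> * (z u)^2)"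
    by (subst sum.swap) (simp add: sym)
  have "(\<Sum>p\<in>V\<times>V. \<bar>A (fst p) (snd p)\<bar> * ((z (fst p))^2 + (z (snd p))^2))
      = (\<Sum>u\<in>V. \<Sum>v\<in>V. \<bar>A u v\<bar> * (z u)^2) + (\<Sum>u\<in>V. \<Sum>v\<in>V. \<bar>A u v\<bar> * (z v)^2)"
    by (simp add: sum.cartesian_product case_prod_beta distrib_left sum.distrib)
  then show ?thesis using half swap by simp
qed

lemma schur_test:
  assumes sym: "\<And>u v. A u v = A v u"
    and row: "\<And>u. u \<in> V \<Longrightarrow> (\<Sum>v\<in>V. \<bar>A u v\<bar>) \<le> c"
    and dom: "\<And>p. p \<in> V\<times>V \<Longrightarrow> \<bar>f p\<bar> \<le> k * (\<bar>A (fst p) (snd p)\<bar> * ((z (fst p))^2 + (z (snd p))^2))"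
    and k: "k \<ge> 0"
  shows "\<bar>\<Sum>p\<in>V\<times>V. f p\<bar> \<le> 2 * c * k * sqnorm V z"
proof -
  have "\<bar>\<Sum>p\<in>V\<times>V. f p\<bar> \<le> (\<Sum>p\<in>V\<times>V. \<bar>f p\<bar>)" by (rule sum_abs)
  also have "\<dots> \<le> (\<Sum>p\<in>V\<times>V. k * (\<bar>A (fst p) (snd p)\<bar> * ((z (fst p))^2 + (z (snd p))^2)))"
    by (rule sum_mono) (rule dom)
  also have "\<dots> \<le> k * (2 * c * sqnorm V z)"
    unfolding sum_distrib_left[symmetric] by (rule mult_left_mono[OF schur_pair_sum[OF sym row] k])
  finally show ?thesis by (simp add: algebra_simps)
qed

lemma product_dominated:
  fixes a g b :: real
  shows "\<bar>a * g * b\<bar> \<le> 1/2 * (\<bar>g\<bar> * (a^2 + b^2))"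
proof -
  have "2 * \<bar>a\<bar> * \<bar>b\<bar> \<le> a^2 + b^2" using sum_squares_bound[of "\<bar>a\<bar>" "\<bar>b\<bar>"] by simp
  from mult_left_mono[OF this, of "\<bar>g\<bar>"] show ?thesis by (simp add: abs_mult algebra_simps)
qed

lemma bilin_row_bound:
  assumes "\<And>u v. A u v = A v u" and "\<And>u. u \<in> V \<Longrightarrow> (\<Sum>v\<in>V. \<bar>A u v\<bar>) \<le> c"
  shows "\<bar>bilin V A z z\<bar> \<le> c * sqnorm V z"
proof -
  have "\<bar>z (fst p) * A (fst p) (snd p) * z (snd p)\<bar>
      \<le> 1/2 * (\<bar>A (fst p) (snd p)\<bar> * ((z (fst p))^2 + (z (snd p))^2))" if "p \<in> V\<times>V" for p
    by (rule product_dominated)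
  from schur_test[OF assms this] show ?thesis
    unfolding bilin_pair_sum by simp
qed

lemma restricted_form_row_bound:
  assumes "finite V" and "\<And>u v. A u v = A v u"
    and "\<And>u. u \<in> V \<Longrightarrow> (\<Sum>v\<in>V. \<bar>A u v\<bar>) \<le> c"
  shows "\<bar>restricted_form V A Es z z\<bar> \<le> c * sqnorm V z"
proof -
  have "\<bar>if (z (fst p), z (snd p)) \<in> Es then z (fst p) * A (fst p) (snd p) * z (snd p) else 0\<bar>
      \<le> 1/2 * (\<bar>A (fst p) (snd p)\<bar> * ((z (fst p))^2 + (z (snd p))^2))" if "p \<in> V\<times>V" for p
    using product_dominated[of "z (fst p)" "A (fst p) (snd p)" "z (snd p)"]
    by (auto simp: zero_le_mult_iff)
  from schur_test[OF assms(2,3) this] show ?thesis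
    unfolding restricted_form_pair_sum[OF assms(1)] by simp
qed

lemma Estar_pos: "(p, q) \<in> Estar d \<Longrightarrow> p > 0 \<and> q > 0"
  unfolding Estar_def by auto

lemma Estar_scale:
  assumes "\<alpha> > (0::real)"
  shows "(\<alpha> * a, \<alpha> * b) \<in> Estar d \<longleftrightarrow> (a, b) \<in> Estar d"
proof -
  have "(\<alpha> * a) / (\<alpha> * b) = a / b" using assms by simp
  moreover have "\<alpha> * a > 0 \<longleftrightarrow> a > 0" "\<alpha> * b > 0 \<longleftrightarrow> b > 0"
    using assms by (simp_all add: zero_less_mult_iff)
  ultimately show ?thesis unfolding Estar_def by simp
qed

lemma Estar_sym: "(a, b) \<in> Estar d \<Longrightarrow> (b, a) \<in> Estar d"
proof -
  assume "(a, b) \<in> Estar d"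
  then have a: "a > 0" and b: "b > 0" and l: "1 / sqrt (real d) < a / b" and u: "a / b < sqrt (real d)"
    unfolding Estar_def by auto
  have s: "sqrt (real d) > 0" using u a b by (smt (verit) divide_pos_pos)
  have "b / a < sqrt (real d)" using l s a b by (simp add: field_simps)
  moreover have "1 / sqrt (real d) < b / a" using u s a b by (simp add: field_simps)
  ultimately show ?thesis using a b unfolding Estar_def by auto
qed

lemma far_product_le:
  assumes d: "real d > 0" and far: "(\<bar>a\<bar>, \<bar>b\<bar>) \<notin> Estar d"
  shows "\<bar>a\<bar> * \<bar>b\<bar> \<le> (a^2 + b^2) / sqrt (real d)"
proof (cases "a = 0 \<or> b = 0")
  case True
  then show ?thesis using d by auto
next
  case False
  let ?s = "sqrt (real d)"
  have s: "?s > 0" using d by simp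
  have pa: "\<bar>a\<bar> > 0" and pb: "\<bar>b\<bar> > 0" using False by auto
  have "\<not> (1 / ?s < \<bar>a\<bar> / \<bar>b\<bar> \<and> \<bar>a\<bar> / \<bar>b\<bar> < ?s)"
    using far pa pb unfolding Estar_def by auto
  then consider "\<bar>a\<bar> * ?s \<le> \<bar>b\<bar>" | "\<bar>b\<bar> * ?s \<le> \<bar>a\<bar>"
    using pa pb s by (fastforce simp: field_simps)
  then have "\<bar>a\<bar> * \<bar>b\<bar> * ?s \<le> a^2 + b^2"
  proof cases
    case 1
    then have "\<bar>a\<bar> * \<bar>b\<bar> * ?s \<le> \<bar>b\<bar> * \<bar>b\<bar>"
      by (metis mult.commute mult.left_commute mult_left_mono abs_ge_zero)
    then show ?thesis by (simp add: power2_eq_square) (smt (verit) zero_le_square)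
  next
    case 2
    then have "\<bar>a\<bar> * \<bar>b\<bar> * ?s \<le> \<bar>a\<bar> * \<bar>a\<bar>"
      by (metis mult.assoc mult_left_mono abs_ge_zero)
    then show ?thesis by (simp add: power2_eq_square) (smt (verit) zero_le_square)
  qed
  then show ?thesis using s by (simp add: field_simps)
qed

definition far_part :: "'a set \<Rightarrow> ('a \<Rightarrow> 'a \<Rightarrow> real) \<Rightarrow> nat \<Rightarrow> ('a \<Rightarrow> real) \<Rightarrow> real" where
  "far_part V A d y = (\<Sum>p\<in>V\<times>V. if (\<bar>y (fst p)\<bar>, \<bar>y (snd p)\<bar>) \<in> Estar d then 0
        else y (fst p) * A (fst p) (snd p) * y (snd p))"

lemma far_part_bound:
  assumes sym: "\<And>u v. A u v = A v u"
    and row: "\<And>u. u \<in> V \<Longrightarrow> (\<Sum>v\<in>V. \<bar>A u v\<bar>) \<le> 2 * real d" and d: "d \<ge> 1"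
  shows "\<bar>far_part V A d y\<bar> \<le> 4 * sqrt (real d) * sqnorm V y"
proof -
  have dp: "real d > 0" using d by simp
  have "\<bar>if (\<bar>y (fst p)\<bar>, \<bar>y (snd p)\<bar>) \<in> Estar d then 0 else y (fst p) * A (fst p) (snd p) * y (snd p)\<bar>
      \<le> 1 / sqrt (real d) * (\<bar>A (fst p) (snd p)\<bar> * ((y (fst p))^2 + (y (snd p))^2))"
    if "p \<in> V\<times>V" for p
  proof (cases "(\<bar>y (fst p)\<bar>, \<bar>y (snd p)\<bar>) \<in> Estar d")
    case False
    have "\<bar>y (fst p)\<bar> * \<bar>y (snd p)\<bar> \<le> 1 / sqrt (real d) * ((y (fst p))^2 + (y (snd p))^2)"
      using far_product_le[OF dp False] by simp
    then have "\<bar>A (fst p) (snd p)\<bar> * (\<bar>y (fst p)\<bar> * \<bar>y (snd p)\<bar>)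
        \<le> \<bar>A (fst p) (snd p)\<bar> * (1 / sqrt (real d) * ((y (fst p))^2 + (y (snd p))^2))"
      by (rule mult_left_mono) simp
    then show ?thesis using False by (simp add: abs_mult mult_ac)
  qed simp
  from schur_test[OF sym row this]
  have "\<bar>far_part V A d y\<bar> \<le> 2 * (2 * real d) * (1 / sqrt (real d)) * sqnorm V y"
    unfolding far_part_def by simp
  also have "2 * (2 * real d) * (1 / sqrt (real d)) = 4 * sqrt (real d)"
    using dp by (simp add: field_simps flip: real_sqrt_mult)
  finally show ?thesis .
qed

(* Splitting a pair contribution a g b according to the signs of a and b: comparable
   pairs of equal sign are counted by the positive or negative part, those of opposite
   sign by the absolute value. *)
lemma sign_split:
  fixes a b g :: real
  shows "a * g * b = (if (\<bar>a\<bar>, \<bar>b\<bar>) \<in> Estar d then 0 else a * g * b)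
     + 2 * (if (max a 0, max b 0) \<in> Estar d then max a 0 * g * max b 0 else 0)
     + 2 * (if (max (-a) 0, max (-b) 0) \<in> Estar d then max (-a) 0 * g * max (-b) 0 else 0)
     - (if (\<bar>a\<bar>, \<bar>b\<bar>) \<in> Estar d then \<bar>a\<bar> * g * \<bar>b\<bar> else 0)"
proof (cases "(\<bar>a\<bar>, \<bar>b\<bar>) \<in> Estar d")
  case False
  have "(max a 0, max b 0) \<notin> Estar d" "(max (-a) 0, max (-b) 0) \<notin> Estar d"
    using False Estar_pos by (fastforce simp: max_def split: if_splits)+
  then show ?thesis using False by simp
next
  case True
  have ab: "\<bar>a\<bar> > 0" "\<bar>b\<bar> > 0" using Estar_pos[OF True] by auto
  then consider "a > 0" "b > 0" | "a < 0" "b < 0" | "a * b < 0"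
    by (cases "a > 0"; cases "b > 0") (auto simp: mult_less_0_iff)
  then show ?thesis
  proof cases
    case 3
    then have "(max a 0, max b 0) \<notin> Estar d" "(max (-a) 0, max (-b) 0) \<notin> Estar d"
      using Estar_pos by (auto simp: max_def mult_less_0_iff)
    then show ?thesis using 3 True ab by (auto simp: mult_less_0_iff)
  qed (use True in \<open>auto simp: max_def dest: Estar_pos\<close>)
qed

lemma bilin_sign_decomposition:
  assumes "finite V"
  shows "bilin V A y y = far_part V A d y
     + 2 * restricted_form V A (Estar d) (\<lambda>v. max (y v) 0) (\<lambda>v. max (y v) 0)
     + 2 * restricted_form V A (Estar d) (\<lambda>v. max (- y v) 0) (\<lambda>v. max (- y v) 0)
     - restricted_form V A (Estar d) (\<lambda>v. \<bar>y v\<bar>) (\<lambda>v. \<bar>y v\<bar>)"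
  unfolding bilin_pair_sum far_part_def restricted_form_pair_sum[OF assms]
  by (subst sign_split[where d=d]) (simp add: sum.distrib sum_subtractf sum_distrib_left)

(* E^* is invariant under scaling, so the restricted form is homogeneous of degree 2. *)
lemma restricted_form_scale:
  assumes "finite V" and "\<alpha> > 0"
  shows "restricted_form V A (Estar d) (\<lambda>v. \<alpha> * z v) (\<lambda>v. \<alpha> * z v) = \<alpha>^2 * restricted_form V A (Estar d) z z"
proof -
  have "(if (\<alpha> * z u, \<alpha> * z v) \<in> Estar d then \<alpha> * z u * A u v * (\<alpha> * z v) else 0)
     = \<alpha>^2 * (if (z u, z v) \<in> Estar d then z u * A u v * z v else 0)" for u v
    using Estar_scale[OF assms(2)] by (simp add: power2_eq_square)
  then show ?thesis unfolding restricted_form_pair_sum[OF assms(1)] by (simp add: sum_distrib_left)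
qed

lemma restricted_form_eq_0_if_sqnorm_0:
  assumes "finite V" and "sqnorm V z = 0"
  shows "restricted_form V A (Estar d) z z = 0"
  unfolding restricted_form_pair_sum[OF assms(1)]
  using sqnorm_eq_0D[OF assms] Estar_pos by (intro sum.neutral) fastforce

lemma finite_lift_vertices: "finite (lift_vertices h n)"
  unfolding lift_vertices_def by simp

definition unit_level :: "nat \<Rightarrow> nat \<Rightarrow> real" where
  "unit_level h n = 1 / sqrt (real n * real h)"

lemma unit_level_pos: "h > 0 \<Longrightarrow> n > 0 \<Longrightarrow> unit_level h n > 0"
  unfolding unit_level_def by simp

lemma card_unit_level: "h > 0 \<Longrightarrow> n > 0 \<Longrightarrow> real (card (lift_vertices h n)) * (unit_level h n)^2 = 1"
  unfolding unit_level_def lift_vertices_def by (simp add: card_cartesian_product power_divide)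

definition level_vec :: "'a set \<Rightarrow> ('a \<Rightarrow> nat) \<Rightarrow> real \<Rightarrow> 'a \<Rightarrow> real" where
  "level_vec Q k \<tau> v = (if v \<in> Q then 2^(k v) * \<tau> else 0)"

(* The zero vector lies in Z, so any bound on |<z,z>_{A,E*}| over Z is nonnegative. *)
lemma zero_in_Zset: "(\<lambda>_. 0) \<in> Zset h n d"
  unfolding Zset_def Dplus_def by simp

lemma Z_bound_nonneg:
  assumes "\<And>z. z \<in> Zset h n d \<Longrightarrow> \<bar>restricted_form V A (Estar d) z z\<bar> \<le> S"
  shows "S \<ge> 0"
  using assms[OF zero_in_Zset] by linarith

lemma level_vec_in_Zset:
  assumes hn: "h > 0" "n > 0" and QV: "Q \<subseteq> lift_vertices h n"
    and ratio: "\<And>u v. u \<in> Q \<Longrightarrow> v \<in> Q \<Longrightarrow> (2::real)^(k u) \<le> real d * 2^(k v)"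
    and small: "((2::real)^j)^2 * sqnorm (lift_vertices h n) (level_vec Q k (unit_level h n)) \<le> 10"
  shows "(\<lambda>v. (2::real)^j * level_vec Q k (unit_level h n) v) \<in> Zset h n d"
proof -
  let ?\<tau> = "unit_level h n"
  let ?z = "\<lambda>v. (2::real)^j * level_vec Q k ?\<tau> v"
  have tp: "?\<tau> > 0" using unit_level_pos[OF hn] .
  have support: "\<forall>v. v \<notin> lift_vertices h n \<longrightarrow> ?z v = 0"
    using QV unfolding level_vec_def by auto
  have norm: "(\<Sum>v\<in>lift_vertices h n. (?z v)\<^sup>2) \<le> 10"
    using small unfolding sqnorm_def by (simp add: power_mult_distrib sum_distrib_left)
  have grid: "?z v \<in> Dplus h n" for v
  proof (cases "v \<in> Q")
    case True
    then have "?z v = 2^(j + k v) / sqrt (real n * real h)"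
      unfolding level_vec_def unit_level_def by (simp add: power_add)
    then show ?thesis unfolding Dplus_def by blast
  qed (simp add: level_vec_def Dplus_def)
  have balanced: "?z u \<le> real d * ?z v" if "?z v \<noteq> 0" for u v
  proof -
    have vQ: "v \<in> Q" using that unfolding level_vec_def by (auto split: if_splits)
    show ?thesis
    proof (cases "u \<in> Q")
      case True
      have "(2::real)^(k u) * (2^j * ?\<tau>) \<le> real d * 2^(k v) * (2^j * ?\<tau>)"
        by (rule mult_right_mono[OF ratio[OF True vQ]]) (use tp in simp)
      then show ?thesis using True vQ unfolding level_vec_def by (simp add: algebra_simps)
    qed (use vQ tp in \<open>simp add: level_vec_def\<close>)
  qed
  show ?thesis unfolding Zset_def using support norm grid balanced by blast
qed

lemma rescale_exponent:
  fixes N :: real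
  assumes "0 < N" "N \<le> 10"
  shows "\<exists>j::nat. 4^j * N \<le> 10 \<and> 10 < 4^(Suc j) * N"
proof -
  obtain m :: nat where "10 / N < 4^m" using real_arch_pow[of 4 "10/N"] by auto
  then have m: "10 < 4^m * N" using assms by (simp add: field_simps)
  define m0 where "m0 = (LEAST m::nat. 10 < 4^m * N)"
  have m0: "10 < 4^m0 * N" unfolding m0_def by (rule LeastI[of _ m]) (rule m)
  have "m0 \<noteq> 0" using m0 assms by (intro notI) simp
  then obtain j where j: "m0 = Suc j" by (cases m0) auto
  have "\<not> 10 < 4^j * N" using j unfolding m0_def by (metis lessI not_less_Least)
  then show ?thesis using m0 j by (intro exI[of _ j]) simp
qed

(* Rescaling a balanced dyadic vector into Z turns the bound S on Z into a bound
   (2/5) S |c|^2 on the restricted form of the vector itself. *)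
lemma balanced_level_vec_bound:
  assumes hn: "h > 0" "n > 0" and QV: "Q \<subseteq> lift_vertices h n"
    and ratio: "\<And>u v. u \<in> Q \<Longrightarrow> v \<in> Q \<Longrightarrow> (2::real)^(k u) \<le> real d * 2^(k v)"
    and small: "sqnorm (lift_vertices h n) (level_vec Q k (unit_level h n)) \<le> 10"
    and SZ: "\<And>z. z \<in> Zset h n d \<Longrightarrow> \<bar>restricted_form (lift_vertices h n) A (Estar d) z z\<bar> \<le> S"
  shows "\<bar>restricted_form (lift_vertices h n) A (Estar d) (level_vec Q k (unit_level h n)) (level_vec Q k (unit_level h n))\<bar>
     \<le> 2/5 * S * sqnorm (lift_vertices h n) (level_vec Q k (unit_level h n))"
proof -
  let ?V = "lift_vertices h n"
  let ?c = "level_vec Q k (unit_level h n)"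
  let ?N = "sqnorm ?V ?c"
  let ?r = "restricted_form ?V A (Estar d) ?c ?c"
  have S0: "S \<ge> 0" by (rule Z_bound_nonneg[OF SZ])
  show ?thesis
  proof (cases "?N = 0")
    case True
    then show ?thesis using restricted_form_eq_0_if_sqnorm_0[OF finite_lift_vertices True] by simp
  next
    case False
    then have Np: "?N > 0" using sqnorm_nonneg[of ?V ?c] by linarith
    obtain j where j1: "4^j * ?N \<le> 10" and j2: "10 < 4^(Suc j) * ?N"
      using rescale_exponent[OF Np small] by blast
    have pw: "((2::real)^j)^2 = 4^j" by (simp add: power2_eq_square flip: power_mult_distrib)
    have small_j: "((2::real)^j)^2 * ?N \<le> 10" unfolding pw by (rule j1)
    have "(\<lambda>v. (2::real)^j * ?c v) \<in> Zset h n d"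
      by (rule level_vec_in_Zset[OF hn QV _ small_j]) (rule ratio)
    from SZ[OF this] have "4^j * \<bar>?r\<bar> \<le> S"
      by (simp add: restricted_form_scale[OF finite_lift_vertices] pw abs_mult)
    then have "\<bar>?r\<bar> \<le> S / 4^j" by (simp add: field_simps)
    also have "S / 4^j \<le> S * (4 * ?N / 10)"
    proof -
      have "1 / (4::real)^j \<le> 4 * ?N / 10" using j2 by (simp add: field_simps)
      from mult_left_mono[OF this S0] show ?thesis by simp
    qed
    finally show ?thesis by simp
  qed
qed

lemma comparable_levels_close:
  fixes a b w d :: nat and \<tau> :: real
  assumes tp: "\<tau> > 0" and E: "(2^a * \<tau>, 2^b * \<tau>) \<in> Estar d"
    and wd: "real d < 2^(2*w+1)"
  shows "a \<le> b + w"
proof (rule ccontr)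
  assume "\<not> a \<le> b + w"
  then have le: "w + 1 \<le> a - b" and ab: "a = (a - b) + b" by auto
  have "(2::real)^(w+1) \<le> 2^(a - b)" by (rule power_increasing[OF le]) simp
  also have "\<dots> = (2^a * \<tau>) / (2^b * \<tau>)" using tp by (subst ab) (simp add: power_add)
  also have "\<dots> < sqrt (real d)" using E unfolding Estar_def by simp
  finally have "((2::real)^(w+1))^2 < (sqrt (real d))^2"
    by (rule power_strict_mono) simp_all
  then have "(2::real)^(2*w+2) < real d" by (simp add: power_mult[symmetric] mult.commute)
  moreover have "(2::real)^(2*w+1) \<le> 2^(2*w+2)" by (rule power_increasing) simp_all
  ultimately show False using wd by linarith
qed

(* Levels lying in the same or adjacent blocks of width w differ by less than 2w, hence
   their dyadic values differ by a factor at most d once 2^(2w-1) <= d. *)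
lemma adjacent_blocks_ratio:
  fixes a b w d :: nat
  assumes ab: "a div w \<le> Suc (b div w)" and w: "w > 0" and wd: "(2::real)^(2*w-1) \<le> real d"
  shows "(2::real)^a \<le> real d * 2^b"
proof -
  have "w * (a div w) \<le> w * (b div w) + w" using mult_le_mono2[OF ab, of w] by simp
  moreover have "a = w * (a div w) + a mod w" by simp
  moreover have "a mod w < w" "w * (b div w) \<le> b"
    using w by (simp_all add: times_div_less_eq_dividend)
  ultimately have "a \<le> b + (2*w - 1)" by linarith
  then have "(2::real)^a \<le> 2^(b + (2*w-1))" by (rule power_increasing) simp
  also have "\<dots> = 2^(2*w-1) * 2^b" by (simp add: power_add)
  also have "\<dots> \<le> real d * 2^b" by (rule mult_right_mono[OF wd]) simp
  finally show ?thesis .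
qed

lemma block_width_exists:
  fixes d :: nat
  assumes "d \<ge> 2"
  shows "\<exists>w>0. (2::real)^(2*w-1) \<le> real d \<and> real d < 2^(2*w+1)"
proof -
  have ex: "real d < 2^(2*d+1)"
  proof -
    have "real d < 2^d" by (metis less_exp of_nat_less_iff of_nat_numeral of_nat_power)
    also have "(2::real)^d \<le> 2^(2*d+1)" by (rule power_increasing) auto
    finally show ?thesis .
  qed
  define m where "m = (LEAST m::nat. real d < 2^(2*m+1))"
  have m: "real d < 2^(2*m+1)" unfolding m_def by (rule LeastI[of _ d]) (rule ex)
  have "m \<noteq> 0" using m assms by (intro notI) simp
  then obtain j where j: "m = Suc j" by (cases m) auto
  have "\<not> real d < 2^(2*j+1)" using j unfolding m_def by (metis lessI not_less_Least)
  then show ?thesis using m j by (intro exI[of _ m]) simp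
qed

definition level_window :: "'a set \<Rightarrow> ('a \<Rightarrow> nat) \<Rightarrow> nat \<Rightarrow> nat \<Rightarrow> 'a set" where
  "level_window Q k w t = {v\<in>Q. k v div w = t \<or> Suc (k v div w) = t}"

definition level_block :: "'a set \<Rightarrow> ('a \<Rightarrow> nat) \<Rightarrow> nat \<Rightarrow> nat \<Rightarrow> 'a set" where
  "level_block Q k w t = {v\<in>Q. k v div w = t}"

lemma level_window_subset: "level_window Q k w t \<subseteq> Q"
  unfolding level_window_def by auto

lemma level_block_subset: "level_block Q k w t \<subseteq> Q"
  unfolding level_block_def by auto

(* Two blocks a, b at distance at most one lie in two common windows when a = b and in one
   otherwise, and in one common block exactly when a = b: the difference is always 1. *)
lemma window_count:
  fixes a b K :: nat
  assumes "a \<le> Suc b" "b \<le> Suc a" "a < K" "b < K"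
  shows "(\<Sum>t\<le>K. if (a = t \<or> Suc a = t) \<and> (b = t \<or> Suc b = t) then 1 else 0::real)
       - (\<Sum>t\<le>K. if a = t \<and> b = t then 1 else 0) = 1"
proof -
  consider "a = b" | "a = Suc b" | "b = Suc a" using assms(1,2) by linarith
  then show ?thesis
  proof cases
    case 1
    then have "(\<Sum>t\<le>K. if (a = t \<or> Suc a = t) \<and> (b = t \<or> Suc b = t) then 1 else 0::real)
        = (\<Sum>t\<le>K. (if t = a then 1 else 0) + (if t = Suc a then 1 else 0))"
      by (intro sum.cong) auto
    then show ?thesis using assms 1 by (simp add: sum.distrib sum.delta eq_commute[of b])
  next
    case 2
    then have "(\<Sum>t\<le>K. if (a = t \<or> Suc a = t) \<and> (b = t \<or> Suc b = t) then 1 else 0::real)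
        = (\<Sum>t\<le>K. if t = a then 1 else 0)"
      by (intro sum.cong) auto
    moreover have "(\<Sum>t\<le>K. if a = t \<and> b = t then 1 else 0::real) = 0"
      using 2 by (intro sum.neutral) auto
    ultimately show ?thesis using assms by (simp add: sum.delta)
  next
    case 3
    then have "(\<Sum>t\<le>K. if (a = t \<or> Suc a = t) \<and> (b = t \<or> Suc b = t) then 1 else 0::real)
        = (\<Sum>t\<le>K. if t = b then 1 else 0)"
      by (intro sum.cong) auto
    moreover have "(\<Sum>t\<le>K. if a = t \<and> b = t then 1 else 0::real) = 0"
      using 3 by (intro sum.neutral) auto
    ultimately show ?thesis using assms by (simp add: sum.delta)
  qed
qed

lemma restricted_form_level_subset:
  assumes fin: "finite V" and sub: "X \<subseteq> Q"
  shows "restricted_form V A (Estar d) (level_vec X k \<tau>) (level_vec X k \<tau>) =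
    (\<Sum>p\<in>V\<times>V. if fst p \<in> X \<and> snd p \<in> X then
        (if (level_vec Q k \<tau> (fst p), level_vec Q k \<tau> (snd p)) \<in> Estar d
         then level_vec Q k \<tau> (fst p) * A (fst p) (snd p) * level_vec Q k \<tau> (snd p) else 0)
      else 0)"
  unfolding restricted_form_pair_sum[OF fin]
proof (rule sum.cong[OF refl])
  fix p :: "(nat\<times>nat)\<times>(nat\<times>nat)"
  show "(if (level_vec X k \<tau> (fst p), level_vec X k \<tau> (snd p)) \<in> Estar d
         then level_vec X k \<tau> (fst p) * A (fst p) (snd p) * level_vec X k \<tau> (snd p) else 0) =
    (if fst p \<in> X \<and> snd p \<in> X then
        (if (level_vec Q k \<tau> (fst p), level_vec Q k \<tau> (snd p)) \<in> Estar d
         then level_vec Q k \<tau> (fst p) * A (fst p) (snd p) * level_vec Q k \<tau> (snd p) else 0)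
      else 0)"
  proof (cases "fst p \<in> X \<and> snd p \<in> X")
    case True
    then show ?thesis using sub unfolding level_vec_def by auto
  next
    case False
    then have "level_vec X k \<tau> (fst p) = 0 \<or> level_vec X k \<tau> (snd p) = 0"
      unfolding level_vec_def by auto
    then have "(level_vec X k \<tau> (fst p), level_vec X k \<tau> (snd p)) \<notin> Estar d"
      using Estar_pos by fastforce
    then show ?thesis by (simp only: if_not_P[OF False] if_False)
  qed
qed

lemma sqnorm_level_subset:
  assumes "X \<subseteq> Q"
  shows "sqnorm V (level_vec X k \<tau>) = (\<Sum>v\<in>V. (level_vec Q k \<tau> v)^2 * (if v \<in> X then 1 else 0))"
  unfolding sqnorm_def by (rule sum.cong) (use assms in \<open>auto simp: level_vec_def\<close>)

lemma sum_restricted_forms_level_family: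
  assumes fin: "finite V" and sub: "\<And>t. X t \<subseteq> Q"
  shows "(\<Sum>t\<in>I. restricted_form V A (Estar d) (level_vec (X t) k \<tau>) (level_vec (X t) k \<tau>))
    = (\<Sum>p\<in>V\<times>V. (if (level_vec Q k \<tau> (fst p), level_vec Q k \<tau> (snd p)) \<in> Estar d
          then level_vec Q k \<tau> (fst p) * A (fst p) (snd p) * level_vec Q k \<tau> (snd p) else 0)
        * (\<Sum>t\<in>I. if fst p \<in> X t \<and> snd p \<in> X t then 1 else 0))"
  unfolding restricted_form_level_subset[OF fin sub]
  by (subst sum.swap) (auto simp: sum_distrib_left intro!: sum.cong)

lemma sum_sqnorm_level_family:
  assumes sub: "\<And>t. X t \<subseteq> Q" and cover: "\<And>v. (\<Sum>t\<in>I. if v \<in> X t then 1 else 0) \<le> (m::real)"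
  shows "(\<Sum>t\<in>I. sqnorm V (level_vec (X t) k \<tau>)) \<le> m * sqnorm V (level_vec Q k \<tau>)"
proof -
  have "(\<Sum>t\<in>I. sqnorm V (level_vec (X t) k \<tau>))
      = (\<Sum>v\<in>V. (level_vec Q k \<tau> v)^2 * (\<Sum>t\<in>I. if v \<in> X t then 1 else 0))"
    unfolding sqnorm_level_subset[OF sub] by (subst sum.swap) (simp add: sum_distrib_left)
  also have "\<dots> \<le> (\<Sum>v\<in>V. (level_vec Q k \<tau> v)^2 * m)"
    by (intro sum_mono mult_left_mono cover) simp
  also have "\<dots> = m * sqnorm V (level_vec Q k \<tau>)"
    unfolding sqnorm_def by (simp add: sum_distrib_left mult.commute)
  finally show ?thesis .
qed

(* Every comparable pair of c lies in exactly one more window than block, so the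
   restricted form of c is the alternating sum of those of its windows and blocks. *)
lemma window_identity:
  assumes fin: "finite V" and tp: "\<tau> > 0" and w: "w > 0" and wd: "real d < 2^(2*w+1)"
    and K: "\<And>v. v \<in> V \<Longrightarrow> k v div w < K"
  shows "restricted_form V A (Estar d) (level_vec Q k \<tau>) (level_vec Q k \<tau>) =
      (\<Sum>t\<le>K. restricted_form V A (Estar d) (level_vec (level_window Q k w t) k \<tau>)
                                              (level_vec (level_window Q k w t) k \<tau>))
    - (\<Sum>t\<le>K. restricted_form V A (Estar d) (level_vec (level_block Q k w t) k \<tau>)
                                              (level_vec (level_block Q k w t) k \<tau>))"
proof -
  let ?c = "level_vec Q k \<tau>"
  define F where "F p = (if (?c (fst p), ?c (snd p)) \<in> Estar d
                         then ?c (fst p) * A (fst p) (snd p) * ?c (snd p) else 0)" for p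
  have once: "F p * (\<Sum>t\<le>K. if fst p \<in> level_window Q k w t \<and> snd p \<in> level_window Q k w t then 1 else 0)
      - F p * (\<Sum>t\<le>K. if fst p \<in> level_block Q k w t \<and> snd p \<in> level_block Q k w t then 1 else 0)
      = F p" if pV: "p \<in> V\<times>V" for p
  proof (cases "(?c (fst p), ?c (snd p)) \<in> Estar d")
    case True
    then have Q: "fst p \<in> Q" "snd p \<in> Q"
      using Estar_pos unfolding level_vec_def by (fastforce split: if_splits)+
    have "k (fst p) \<le> k (snd p) + w"
      by (rule comparable_levels_close[OF tp _ wd]) (use True Q in \<open>simp add: level_vec_def\<close>)
    then have b1: "k (fst p) div w \<le> Suc (k (snd p) div w)"
      using div_le_mono[of "k (fst p)" "k (snd p) + w" w] w by simp
    have "k (snd p) \<le> k (fst p) + w"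
      by (rule comparable_levels_close[OF tp _ wd]) (use Estar_sym[OF True] Q in \<open>simp add: level_vec_def\<close>)
    then have b2: "k (snd p) div w \<le> Suc (k (fst p) div w)"
      using div_le_mono[of "k (snd p)" "k (fst p) + w" w] w by simp
    have "(\<Sum>t\<le>K. if fst p \<in> level_window Q k w t \<and> snd p \<in> level_window Q k w t then 1 else 0::real)
        - (\<Sum>t\<le>K. if fst p \<in> level_block Q k w t \<and> snd p \<in> level_block Q k w t then 1 else 0) = 1"
      using window_count[OF b1 b2 K K] pV Q
      unfolding level_window_def level_block_def by (auto simp: mem_Times_iff)
    then show ?thesis by (simp flip: right_diff_distrib)
  qed (simp add: F_def)
  have "restricted_form V A (Estar d) ?c ?c = (\<Sum>p\<in>V\<times>V. F p)"
    unfolding restricted_form_pair_sum[OF fin] F_def by simp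
  also have "\<dots> = (\<Sum>p\<in>V\<times>V.
        F p * (\<Sum>t\<le>K. if fst p \<in> level_window Q k w t \<and> snd p \<in> level_window Q k w t then 1 else 0)
      - F p * (\<Sum>t\<le>K. if fst p \<in> level_block Q k w t \<and> snd p \<in> level_block Q k w t then 1 else 0))"
    using once by (intro sum.cong) auto
  finally show ?thesis
    unfolding sum_subtractf F_def sum_restricted_forms_level_family[OF fin level_window_subset]
      sum_restricted_forms_level_family[OF fin level_block_subset] .
qed

lemma window_cover:
  assumes "finite I"
  shows "(\<Sum>t\<in>I. if v \<in> level_window Q k w t then 1 else 0::real) \<le> 2"
proof -
  have "(\<Sum>t\<in>I. if v \<in> level_window Q k w t then 1 else 0::real)
      \<le> (\<Sum>t\<in>I. (if t = k v div w then 1 else 0) + (if t = Suc (k v div w) then 1 else 0))"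
    by (intro sum_mono) (auto simp: level_window_def)
  also have "\<dots> \<le> 2" using assms by (simp add: sum.distrib sum.delta)
  finally show ?thesis .
qed

lemma block_cover:
  assumes "finite I"
  shows "(\<Sum>t\<in>I. if v \<in> level_block Q k w t then 1 else 0::real) \<le> 1"
proof -
  have "(\<Sum>t\<in>I. if v \<in> level_block Q k w t then 1 else 0::real) \<le> (\<Sum>t\<in>I. if t = k v div w then 1 else 0)"
    by (intro sum_mono) (auto simp: level_block_def)
  also have "\<dots> \<le> 1" using assms by (simp add: sum.delta)
  finally show ?thesis .
qed

lemma sqnorm_level_mono: "X \<subseteq> Q \<Longrightarrow> sqnorm V (level_vec X k \<tau>) \<le> sqnorm V (level_vec Q k \<tau>)"
  unfolding sqnorm_def level_vec_def by (rule sum_mono) auto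

(* Bound for an arbitrary dyadic vector c of squared norm at most 10: every window and
   every block has levels within a factor d, so the rescaling bound applies to each; the
   windows cover every vertex twice and the blocks once, giving (2/5)(2+1) S |c|^2. *)
lemma level_vec_restricted_bound:
  assumes hn: "h > 0" "n > 0" and QV: "Q \<subseteq> lift_vertices h n"
    and w: "w > 0" and wd1: "(2::real)^(2*w-1) \<le> real d" and wd2: "real d < 2^(2*w+1)"
    and small: "sqnorm (lift_vertices h n) (level_vec Q k (unit_level h n)) \<le> 10"
    and SZ: "\<And>z. z \<in> Zset h n d \<Longrightarrow> \<bar>restricted_form (lift_vertices h n) A (Estar d) z z\<bar> \<le> S"
  shows "\<bar>restricted_form (lift_vertices h n) A (Estar d) (level_vec Q k (unit_level h n)) (level_vec Q k (unit_level h n))\<bar>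
     \<le> 6/5 * S * sqnorm (lift_vertices h n) (level_vec Q k (unit_level h n))"
proof -
  let ?V = "lift_vertices h n"
  let ?\<tau> = "unit_level h n"
  let ?c = "level_vec Q k ?\<tau>"
  let ?rf = "\<lambda>X. restricted_form ?V A (Estar d) (level_vec X k ?\<tau>) (level_vec X k ?\<tau>)"
  let ?nrm = "\<lambda>X. sqnorm ?V (level_vec X k ?\<tau>)"
  have S0: "S \<ge> 0" by (rule Z_bound_nonneg[OF SZ])
  define K where "K = Suc (Max ((\<lambda>v. k v div w) ` ?V))"
  have K: "k v div w < K" if "v \<in> ?V" for v
    unfolding K_def using finite_lift_vertices that by (simp add: le_imp_less_Suc)
  have piece: "\<bar>?rf X\<bar> \<le> 2/5 * S * ?nrm X"
    if XQ: "X \<subseteq> Q" and near: "\<And>u v. u \<in> X \<Longrightarrow> v \<in> X \<Longrightarrow> k u div w \<le> Suc (k v div w)" for X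
  proof (rule balanced_level_vec_bound[OF hn _ _ _ SZ])
    show "X \<subseteq> ?V" using XQ QV by blast
    show "?nrm X \<le> 10" using sqnorm_level_mono[OF XQ] small by (rule order_trans)
    show "(2::real)^(k u) \<le> real d * 2^(k v)" if "u \<in> X" "v \<in> X" for u v
      by (rule adjacent_blocks_ratio[OF near[OF that] w wd1])
  qed
  have windows: "(\<Sum>t\<le>K. ?nrm (level_window Q k w t)) \<le> 2 * sqnorm ?V ?c"
    by (rule sum_sqnorm_level_family[OF level_window_subset window_cover[OF finite_atMost]])
  have blocks: "(\<Sum>t\<le>K. ?nrm (level_block Q k w t)) \<le> 1 * sqnorm ?V ?c"
    by (rule sum_sqnorm_level_family[OF level_block_subset block_cover[OF finite_atMost]])
  have "?rf Q = (\<Sum>t\<le>K. ?rf (level_window Q k w t)) - (\<Sum>t\<le>K. ?rf (level_block Q k w t))"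
    by (rule window_identity[OF finite_lift_vertices unit_level_pos[OF hn] w wd2 K])
  then have "\<bar>?rf Q\<bar> \<le> (\<Sum>t\<le>K. \<bar>?rf (level_window Q k w t)\<bar>) + (\<Sum>t\<le>K. \<bar>?rf (level_block Q k w t)\<bar>)"
    by (simp only:) (rule order_trans[OF abs_triangle_ineq4 add_mono[OF sum_abs sum_abs]])
  also have "\<dots> \<le> (\<Sum>t\<le>K. 2/5 * S * ?nrm (level_window Q k w t)) + (\<Sum>t\<le>K. 2/5 * S * ?nrm (level_block Q k w t))"
    by (intro add_mono sum_mono piece) (auto simp: level_window_def level_block_def)
  also have "\<dots> = 2/5 * S * ((\<Sum>t\<le>K. ?nrm (level_window Q k w t)) + (\<Sum>t\<le>K. ?nrm (level_block Q k w t)))"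
    by (simp add: sum_distrib_left distrib_left)
  also have "\<dots> \<le> 2/5 * S * (2 * sqnorm ?V ?c + 1 * sqnorm ?V ?c)"
    by (intro mult_left_mono add_mono windows blocks) (use S0 in simp)
  finally show ?thesis by simp
qed

lemma dyadic_rounding:
  fixes q :: real
  assumes q: "q > 1/2"
  shows "q \<le> 2^(nat \<lceil>log 2 q\<rceil>) \<and> 2^(nat \<lceil>log 2 q\<rceil>) < 2 * q"
proof -
  let ?L = "log 2 q"
  have qp: "q > 0" using q by simp
  have "log 2 (1/2) < ?L" using q qp by (subst log_less_cancel_iff) auto
  then have "?L > -1" by (simp add: log_divide)
  moreover have c: "of_int \<lceil>?L\<rceil> - 1 < ?L" "?L \<le> of_int \<lceil>?L\<rceil>" using ceiling_correct by auto
  ultimately have "\<lceil>?L\<rceil> \<ge> 0" by linarith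
  then have eq: "(2::real)^(nat \<lceil>?L\<rceil>) = 2 powr (of_int \<lceil>?L\<rceil>)"
    by (simp add: powr_realpow[symmetric])
  have "q = 2 powr ?L" using qp by simp
  also have "\<dots> \<le> 2 powr (of_int \<lceil>?L\<rceil>)" by (rule powr_mono[OF c(2)]) simp
  finally have "q \<le> 2^(nat \<lceil>?L\<rceil>)" using eq by simp
  moreover have "2 powr (of_int \<lceil>?L\<rceil>) < 2 powr (?L + 1)" by (rule powr_less_mono) (use c in auto)
  then have "2^(nat \<lceil>?L\<rceil>) < 2 * q" using eq qp by (simp add: powr_add)
  ultimately show ?thesis by simp
qed

lemma dyadic_round_coordinate:
  fixes x m :: real
  assumes "\<bar>x\<bar> \<le> m" "m < 2 * \<bar>x\<bar>"
  defines "y \<equiv> (if x > 0 then m else - m)"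
  shows "x^2 \<le> y^2" "y^2 \<le> 4 * x^2" "(x - y)^2 \<le> y^2 / 4"
proof -
  have ym: "y^2 = m^2" unfolding y_def by simp
  show "x^2 \<le> y^2" using assms(1) ym by (metis abs_ge_zero power2_abs power_mono)
  have "m^2 \<le> (2 * \<bar>x\<bar>)^2" using assms by (intro power_mono) auto
  then show "y^2 \<le> 4 * x^2" using ym by (simp add: power_mult_distrib)
  have "\<bar>x - y\<bar> \<le> m / 2" unfolding y_def using assms by auto
  then have "(x - y)^2 \<le> (m/2)^2" by (metis abs_ge_zero power2_abs power_mono)
  then show "(x - y)^2 \<le> y^2 / 4" using ym by (simp add: power_divide)
qed

(* Rounding a vector of squared norm 5/2 to the dyadic grid: entries below tau/2 are set
   to 0, the others are rounded up in absolute value to 2^k tau. *)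
lemma dyadic_rounding_vector:
  fixes x :: "nat\<times>nat \<Rightarrow> real"
  assumes hn: "h > 0" "n > 0" and nx: "sqnorm (lift_vertices h n) x = 5/2"
  obtains Pp Pm k where "Pp \<subseteq> lift_vertices h n" "Pm \<subseteq> lift_vertices h n" "Pp \<inter> Pm = {}"
    and "9/4 \<le> sqnorm (lift_vertices h n) (\<lambda>v. level_vec Pp k (unit_level h n) v - level_vec Pm k (unit_level h n) v)"
    and "sqnorm (lift_vertices h n) (\<lambda>v. level_vec Pp k (unit_level h n) v - level_vec Pm k (unit_level h n) v) \<le> 10"
    and "sqnorm (lift_vertices h n) (\<lambda>v. x v - (level_vec Pp k (unit_level h n) v - level_vec Pm k (unit_level h n) v))
       \<le> sqnorm (lift_vertices h n) (\<lambda>v. level_vec Pp k (unit_level h n) v - level_vec Pm k (unit_level h n) v) / 4 + 1/4"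
proof -
  let ?V = "lift_vertices h n"
  let ?\<tau> = "unit_level h n"
  have tp: "?\<tau> > 0" by (rule unit_level_pos[OF hn])
  define P where "P = {v\<in>?V. \<bar>x v\<bar> > ?\<tau>/2}"
  define k where "k v = nat \<lceil>log 2 (\<bar>x v\<bar> / ?\<tau>)\<rceil>" for v
  define Pp where "Pp = {v\<in>P. x v > 0}"
  define Pm where "Pm = {v\<in>P. x v < 0}"
  define y where "y v = level_vec Pp k ?\<tau> v - level_vec Pm k ?\<tau> v" for v
  have coord: "(x v)^2 - ?\<tau>^2/4 \<le> (y v)^2 \<and> (y v)^2 \<le> 4 * (x v)^2 \<and> (x v - y v)^2 \<le> (y v)^2 / 4 + ?\<tau>^2/4"
    if "v \<in> ?V" for v
  proof (cases "v \<in> P")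
    case True
    then have "\<bar>x v\<bar> / ?\<tau> > 1/2" using tp unfolding P_def by (simp add: field_simps)
    from dyadic_rounding[OF this] have m: "\<bar>x v\<bar> \<le> 2^(k v) * ?\<tau>" "2^(k v) * ?\<tau> < 2 * \<bar>x v\<bar>"
      unfolding k_def using tp by (simp_all add: field_simps)
    have yv: "y v = (if x v > 0 then 2^(k v) * ?\<tau> else - (2^(k v) * ?\<tau>))"
      using True tp unfolding y_def level_vec_def Pp_def Pm_def P_def by auto
    have "?\<tau>^2/4 \<ge> 0" by simp
    then show ?thesis using dyadic_round_coordinate[OF m, folded yv] by linarith
  next
    case False
    then have small: "\<bar>x v\<bar> \<le> ?\<tau>/2" and "y v = 0"
      using that unfolding P_def y_def level_vec_def Pp_def Pm_def by auto
    have "(x v)^2 \<le> (?\<tau>/2)^2" using small by (metis abs_ge_zero power2_abs power_mono)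
    then show ?thesis using \<open>y v = 0\<close> by (simp add: power_divide)
  qed
  have sum_tau: "(\<Sum>v\<in>?V. ?\<tau>^2/4) = 1/4" using card_unit_level[OF hn] by simp
  have "(\<Sum>v\<in>?V. (x v)^2 - ?\<tau>^2/4) \<le> sqnorm ?V y"
    unfolding sqnorm_def by (rule sum_mono) (use coord in blast)
  moreover have "(\<Sum>v\<in>?V. (x v)^2 - ?\<tau>^2/4) = 5/2 - 1/4"
    using nx sum_tau unfolding sqnorm_def by (simp add: sum_subtractf)
  ultimately have lower: "9/4 \<le> sqnorm ?V y" by simp
  have "sqnorm ?V y \<le> (\<Sum>v\<in>?V. 4 * (x v)^2)"
    unfolding sqnorm_def by (rule sum_mono) (use coord in blast)
  then have upper: "sqnorm ?V y \<le> 10" using nx unfolding sqnorm_def by (simp add: sum_distrib_left[symmetric])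
  have "sqnorm ?V (\<lambda>v. x v - y v) \<le> (\<Sum>v\<in>?V. (y v)^2 / 4 + ?\<tau>^2/4)"
    unfolding sqnorm_def by (rule sum_mono) (use coord in blast)
  also have "\<dots> = sqnorm ?V y / 4 + 1/4"
    using sum_tau unfolding sqnorm_def by (simp add: sum.distrib sum_divide_distrib)
  finally have close: "sqnorm ?V (\<lambda>v. x v - y v) \<le> sqnorm ?V y / 4 + 1/4" .
  have "Pp \<subseteq> ?V" "Pm \<subseteq> ?V" "Pp \<inter> Pm = {}" unfolding Pp_def Pm_def P_def by auto
  with lower upper close show ?thesis using that unfolding y_def by blast
qed

(* The quadratic form of a rounded vector y = level_vec Pp k tau - level_vec Pm k tau of
   squared norm at most 10 is at most (4 sqrt d + 18/5 S) |y|^2: its far part is controlled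
   by the row sums and its three restricted parts by the bound on Z. *)
lemma signed_level_vec_bound:
  assumes hn: "h > 0" "n > 0" and d: "d \<ge> 2"
    and sym: "\<And>u v. A u v = A v u"
    and row: "\<And>u. u \<in> lift_vertices h n \<Longrightarrow> (\<Sum>v\<in>lift_vertices h n. \<bar>A u v\<bar>) \<le> 2 * real d"
    and SZ: "\<And>z. z \<in> Zset h n d \<Longrightarrow> \<bar>restricted_form (lift_vertices h n) A (Estar d) z z\<bar> \<le> S"
    and PV: "Pp \<subseteq> lift_vertices h n" "Pm \<subseteq> lift_vertices h n" and disj: "Pp \<inter> Pm = {}"
    and y: "y = (\<lambda>v. level_vec Pp k (unit_level h n) v - level_vec Pm k (unit_level h n) v)"
    and small: "sqnorm (lift_vertices h n) y \<le> 10"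
  shows "bilin (lift_vertices h n) A y y \<le> (4 * sqrt (real d) + 18/5 * S) * sqnorm (lift_vertices h n) y"
proof -
  let ?V = "lift_vertices h n"
  let ?\<tau> = "unit_level h n"
  let ?rf = "\<lambda>X. restricted_form ?V A (Estar d) (level_vec X k ?\<tau>) (level_vec X k ?\<tau>)"
  let ?nrm = "\<lambda>X. sqnorm ?V (level_vec X k ?\<tau>)"
  have tp: "?\<tau> > 0" by (rule unit_level_pos[OF hn])
  obtain w where w: "w > 0" and wd: "(2::real)^(2*w-1) \<le> real d" "real d < 2^(2*w+1)"
    using block_width_exists[OF d] by blast
  have parts: "(\<lambda>v. max (y v) 0) = level_vec Pp k ?\<tau>" "(\<lambda>v. max (- y v) 0) = level_vec Pm k ?\<tau>"
    "(\<lambda>v. \<bar>y v\<bar>) = level_vec (Pp \<union> Pm) k ?\<tau>"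
    using tp disj unfolding y level_vec_def by (auto simp: fun_eq_iff)
  have split: "?nrm Pp + ?nrm Pm = sqnorm ?V y" "?nrm (Pp \<union> Pm) = sqnorm ?V y"
    unfolding sqnorm_def parts(3)[symmetric] sum.distrib[symmetric]
    by (rule sum.cong, simp, use disj in \<open>auto simp: y level_vec_def\<close>)+
  have piece: "\<bar>?rf X\<bar> \<le> 6/5 * S * ?nrm X" if "X \<subseteq> ?V" "?nrm X \<le> 10" for X
    by (rule level_vec_restricted_bound[OF hn that(1) w wd that(2) SZ])
  have "\<bar>?rf Pp\<bar> \<le> 6/5 * S * ?nrm Pp" "\<bar>?rf Pm\<bar> \<le> 6/5 * S * ?nrm Pm"
    "\<bar>?rf (Pp \<union> Pm)\<bar> \<le> 6/5 * S * sqnorm ?V y"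
    using piece[OF PV(1)] piece[OF PV(2)] piece[of "Pp \<union> Pm"] PV split small
      sqnorm_nonneg[of ?V "level_vec Pp k ?\<tau>"] sqnorm_nonneg[of ?V "level_vec Pm k ?\<tau>"] by auto
  moreover have "\<bar>far_part ?V A d y\<bar> \<le> 4 * sqrt (real d) * sqnorm ?V y"
    using d by (intro far_part_bound[OF sym row]) auto
  moreover have "bilin ?V A y y = far_part ?V A d y + 2 * ?rf Pp + 2 * ?rf Pm - ?rf (Pp \<union> Pm)"
    using bilin_sign_decomposition[OF finite_lift_vertices, where A=A and y=y and d=d] unfolding parts .
  ultimately have "bilin ?V A y y \<le> 4 * sqrt (real d) * sqnorm ?V y
      + 12/5 * S * (?nrm Pp + ?nrm Pm) + 6/5 * S * sqnorm ?V y"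
    by (simp add: algebra_simps)
  then show ?thesis unfolding split by (simp add: algebra_simps)
qed

(* The cross terms are controlled by
   testing the bound mu at the vectors x +- theta r. *)
lemma perturbation_bound:
  fixes A :: "'a \<Rightarrow> 'a \<Rightarrow> real"
  assumes sym: "\<And>u v. A u v = A v u"
    and muB: "\<And>z. \<bar>bilin V A z z\<bar> \<le> \<mu> * sqnorm V z"
    and th: "0 < \<theta>" "\<theta> \<le> 1"
    and nx: "sqnorm V x = 5/2" and bx: "bilin V A x x \<ge> 5/2 * (\<mu> - \<theta>^2)"
  shows "\<mu> * (sqnorm V y - 2 * sqnorm V (\<lambda>v. x v - y v))
      \<le> bilin V A y y + \<theta> * (5 + 2 * \<mu> * sqnorm V (\<lambda>v. x v - y v))"
proof -
  define r where "r v = x v - y v" for v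
  define R where "R = sqnorm V r"
  have hy: "y = (\<lambda>v. x v + (-1) * r v)" unfolding r_def by (simp add: fun_eq_iff)
  define D where "D = \<mu> * sqnorm V x - bilin V A x x"
  define G where "G = \<mu> * R - bilin V A r r"
  define X where "X = bilin V A x r - \<mu> * dotp V x r"
  have D: "D \<le> 5/2 * \<theta>^2" unfolding D_def using nx bx by (simp add: algebra_simps)
  have brr: "- (\<mu> * R) \<le> bilin V A r r" using muB[of r] unfolding R_def by linarith
  then have G: "G \<le> 2 * \<mu> * R" unfolding G_def by linarith
  have line: "bilin V A x x + 2 * s * bilin V A x r + s^2 * bilin V A r r
      \<le> \<mu> * (sqnorm V x + 2 * s * dotp V x r + s^2 * R)" for s
    using muB[of "\<lambda>v. x v + s * r v"] unfolding bilin_expand[OF sym] sqnorm_expand R_def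
    by (meson abs_ge_self order_trans)
  have "D + \<theta>^2 * G - 2 * \<theta> * X \<ge> 0" and "D + \<theta>^2 * G + 2 * \<theta> * X \<ge> 0"
    using line[of \<theta>] line[of "-\<theta>"] unfolding D_def G_def X_def by (simp_all add: algebra_simps)
  then have "2 * \<theta> * \<bar>X\<bar> \<le> D + \<theta>^2 * G" by (cases "X \<ge> 0") simp_all
  then have cross: "2 * \<bar>X\<bar> \<le> D / \<theta> + \<theta> * G" using th by (simp add: field_simps power2_eq_square)
  have "\<theta>^2 \<le> \<theta>" using th by (simp add: power2_eq_square mult_le_cancel_left1)
  then have "D \<le> 5/2 * \<theta>" using D by linarith
  moreover have "D / \<theta> \<le> 5/2 * \<theta>" using D th by (simp add: field_simps power2_eq_square)
  moreover have "\<mu> * (sqnorm V y - 2 * R) - bilin V A y y = D + 2 * X - \<mu> * R - bilin V A r r"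
    unfolding hy bilin_expand[OF sym] sqnorm_expand D_def X_def R_def by (simp add: algebra_simps)
  ultimately have "\<mu> * (sqnorm V y - 2 * R) \<le> bilin V A y y + 5 * \<theta> + \<theta> * G"
    using cross brr abs_ge_self[of X] by linarith
  moreover have "\<theta> * G \<le> \<theta> * (2 * \<mu> * R)" using G th by simp
  ultimately show ?thesis unfolding R_def r_def by (simp add: algebra_simps)
qed

(* Round x to y, bound y^T A y via Z, and transfer back to mu. *)
lemma near_extremal_bound:
  assumes hn: "h > 0" "n > 0" and d: "d \<ge> 2"
    and sym: "\<And>u v. A u v = A v u"
    and row: "\<And>u. u \<in> lift_vertices h n \<Longrightarrow> (\<Sum>v\<in>lift_vertices h n. \<bar>A u v\<bar>) \<le> 2 * real d"
    and SZ: "\<And>z. z \<in> Zset h n d \<Longrightarrow> \<bar>restricted_form (lift_vertices h n) A (Estar d) z z\<bar> \<le> S"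
    and mu: "0 \<le> \<mu>" "\<mu> \<le> 2 * real d"
    and muB: "\<And>z. \<bar>bilin (lift_vertices h n) A z z\<bar> \<le> \<mu> * sqnorm (lift_vertices h n) z"
    and th: "0 < \<theta>" "\<theta> \<le> 1"
    and nx: "sqnorm (lift_vertices h n) x = 5/2"
    and bx: "bilin (lift_vertices h n) A x x \<ge> 5/2 * (\<mu> - \<theta>^2)"
  shows "\<mu> \<le> 18/5 * (4 * sqrt (real d) + 18/5 * S) + 8/5 * \<theta> * (5 + 11 * real d)"
proof -
  let ?V = "lift_vertices h n"
  define K0 where "K0 = 4 * sqrt (real d) + 18/5 * S"
  define C where "C = \<theta> * (5 + 11 * real d)"
  obtain Pp Pm k where PV: "Pp \<subseteq> ?V" "Pm \<subseteq> ?V" "Pp \<inter> Pm = {}"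
    and bounds: "9/4 \<le> sqnorm ?V (\<lambda>v. level_vec Pp k (unit_level h n) v - level_vec Pm k (unit_level h n) v)"
      "sqnorm ?V (\<lambda>v. level_vec Pp k (unit_level h n) v - level_vec Pm k (unit_level h n) v) \<le> 10"
    and close: "sqnorm ?V (\<lambda>v. x v - (level_vec Pp k (unit_level h n) v - level_vec Pm k (unit_level h n) v))
       \<le> sqnorm ?V (\<lambda>v. level_vec Pp k (unit_level h n) v - level_vec Pm k (unit_level h n) v) / 4 + 1/4"
    using dyadic_rounding_vector[OF hn nx] by blast
  define y where "y v = level_vec Pp k (unit_level h n) v - level_vec Pm k (unit_level h n) v" for v
  define Y where "Y = sqnorm ?V y"
  define R where "R = sqnorm ?V (\<lambda>v. x v - y v)"
  have Y: "9/4 \<le> Y" "Y \<le> 10" and R: "R \<le> Y/4 + 1/4"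
    using bounds close unfolding Y_def R_def y_def by simp_all
  have "y = (\<lambda>v. level_vec Pp k (unit_level h n) v - level_vec Pm k (unit_level h n) v)"
    by (simp add: y_def[abs_def])
  from signed_level_vec_bound[OF hn d sym row SZ PV this] Y
  have form: "bilin ?V A y y \<le> K0 * Y" unfolding K0_def Y_def by simp
  have "\<mu> * (Y - 2 * R) \<le> bilin ?V A y y + \<theta> * (5 + 2 * \<mu> * R)"
    unfolding Y_def R_def by (rule perturbation_bound[OF sym muB th nx bx])
  moreover have "2 * \<mu> * R \<le> 11 * real d"
  proof -
    have "\<mu> * R \<le> (2 * real d) * (11/4)"
      using R Y sqnorm_nonneg[of ?V "\<lambda>v. x v - y v"] by (intro mult_mono mu) (simp_all add: R_def)
    then show ?thesis by simp
  qed
  ultimately have "\<mu> * (Y - 2 * R) \<le> K0 * Y + C"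
    using form th unfolding C_def by (smt (verit) mult_left_mono)
  moreover have "\<mu> * (5/18 * Y) \<le> \<mu> * (Y - 2 * R)"
    using R Y by (intro mult_left_mono mu) simp_all
  moreover have "C \<le> 4/9 * C * Y"
  proof -
    have "C \<ge> 0" using th unfolding C_def by simp
    from mult_left_mono[OF _ this, of 1 "4/9 * Y"] show ?thesis using Y by (simp add: mult_ac)
  qed
  ultimately have "\<mu> * Y \<le> (18/5 * K0 + 8/5 * C) * Y" by (simp add: algebra_simps)
  then have "\<mu> \<le> 18/5 * K0 + 8/5 * C" using Y by simp
  then show ?thesis unfolding K0_def C_def by (simp add: algebra_simps)
qed

lemma optimal_form_constant:
  fixes A :: "'a \<Rightarrow> 'a \<Rightarrow> real"
  assumes fin: "finite V" and ne: "V \<noteq> {}" and c: "\<And>z. \<bar>bilin V A z z\<bar> \<le> c * sqnorm V z"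
  obtains \<mu> where "0 \<le> \<mu>" "\<mu> \<le> c" "\<And>z. \<bar>bilin V A z z\<bar> \<le> \<mu> * sqnorm V z"
    and "\<And>e. e > 0 \<Longrightarrow> \<exists>x. sqnorm V x = 5/2 \<and> bilin V A x x \<ge> 5/2 * (\<mu> - e) \<or>
                              sqnorm V x = 5/2 \<and> - bilin V A x x \<ge> 5/2 * (\<mu> - e)"
proof -
  define Rs where "Rs = {\<bar>bilin V A z z\<bar> / sqnorm V z | z. sqnorm V z \<noteq> 0}"
  define \<mu> where "\<mu> = Sup Rs"
  have pos: "sqnorm V z > 0" if "sqnorm V z \<noteq> 0" for z
    using that sqnorm_nonneg[of V z] by linarith
  obtain v0 where v0: "v0 \<in> V" using ne by blast
  have "sqnorm V (\<lambda>v. if v = v0 then 1 else 0) = (\<Sum>v\<in>V. if v = v0 then 1 else 0)"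
    unfolding sqnorm_def by (intro sum.cong) auto
  also have "\<dots> = 1" using fin v0 by (simp add: sum.delta)
  finally have "sqnorm V (\<lambda>v. if v = v0 then 1 else 0) = 1" .
  then have Rne: "Rs \<noteq> {}" unfolding Rs_def by force
  have Rle: "r \<le> c" if "r \<in> Rs" for r
    using that c pos unfolding Rs_def by (auto simp: field_simps)
  have bdd: "bdd_above Rs" using Rle by (rule bdd_aboveI)
  have Rup: "r \<le> \<mu>" if "r \<in> Rs" for r
    unfolding \<mu>_def by (rule cSup_upper[OF that bdd])
  have Rnn: "r \<ge> 0" if "r \<in> Rs" for r
    using that unfolding Rs_def by (auto intro!: divide_nonneg_nonneg sqnorm_nonneg)
  have bound: "\<bar>bilin V A z z\<bar> \<le> \<mu> * sqnorm V z" for z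
  proof (cases "sqnorm V z = 0")
    case True
    then show ?thesis using bilin_eq_0_if_sqnorm_0[OF fin True] by simp
  next
    case False
    then have "\<bar>bilin V A z z\<bar> / sqnorm V z \<le> \<mu>" by (intro Rup) (auto simp: Rs_def)
    then show ?thesis using pos[OF False] by (simp add: field_simps)
  qed
  have approx: "\<exists>x. sqnorm V x = 5/2 \<and> bilin V A x x \<ge> 5/2 * (\<mu> - e) \<or>
                    sqnorm V x = 5/2 \<and> - bilin V A x x \<ge> 5/2 * (\<mu> - e)" if e: "e > 0" for e
  proof -
    have "\<mu> - e < Sup Rs" unfolding \<mu>_def using e by simp
    then obtain r where "r \<in> Rs" and rgt: "\<mu> - e < r"
      using less_cSup_iff[OF Rne bdd] by auto
    then obtain z where r: "r = \<bar>bilin V A z z\<bar> / sqnorm V z" and nz: "sqnorm V z \<noteq> 0"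
      unfolding Rs_def by blast
    define s where "s = sqrt (5/2 / sqnorm V z)"
    have s2: "s^2 = 5/2 / sqnorm V z" unfolding s_def using pos[OF nz] by simp
    define x where "x v = s * z v" for v
    have "sqnorm V x = 5/2" unfolding x_def[abs_def] sqnorm_scale s2 using nz by simp
    moreover have "\<bar>bilin V A x x\<bar> = 5/2 * r"
      unfolding x_def[abs_def] bilin_scale r s2 using pos[OF nz] by (simp add: abs_mult)
    ultimately show ?thesis using rgt by (intro exI[of _ x]) (auto simp: abs_if split: if_splits)
  qed
  show ?thesis
  proof (rule that[OF _ _ bound approx])
    show "0 \<le> \<mu>" using Rne Rnn Rup by (meson ex_in_conv order_trans)
    show "\<mu> \<le> c" unfolding \<mu>_def by (rule cSup_least[OF Rne Rle])
  qed
qed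

lemma le_if_le_plus_vanishing:
  fixes \<mu> B C :: real
  assumes C: "C \<ge> 0" and le: "\<And>\<theta>. 0 < \<theta> \<Longrightarrow> \<theta> \<le> 1 \<Longrightarrow> \<mu> \<le> B + C * \<theta>"
  shows "\<mu> \<le> B"
proof (rule field_le_epsilon)
  fix e :: real assume e: "0 < e"
  define \<theta> where "\<theta> = min 1 (e / (C + 1))"
  have "0 < \<theta>" "\<theta> \<le> 1" unfolding \<theta>_def using e C by auto
  moreover have "C * \<theta> \<le> e"
  proof -
    have "C * \<theta> \<le> C * (e / (C + 1))" unfolding \<theta>_def by (rule mult_left_mono[OF _ C]) simp
    also have "\<dots> \<le> e" using e C by (simp add: field_simps)
    finally show ?thesis .
  qed
  ultimately show "\<mu> \<le> B + e" using le by fastforce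
qed

lemma quadratic_form_bound:
  assumes d: "d \<ge> 2"
    and sym: "\<And>u v. A u v = A v u"
    and row: "\<And>u. u \<in> lift_vertices h n \<Longrightarrow> (\<Sum>v\<in>lift_vertices h n. \<bar>A u v\<bar>) \<le> 2 * real d"
    and SZ: "\<And>z. z \<in> Zset h n d \<Longrightarrow> \<bar>restricted_form (lift_vertices h n) A (Estar d) z z\<bar> \<le> S"
  shows "\<bar>bilin (lift_vertices h n) A z z\<bar>
      \<le> 18/5 * (4 * sqrt (real d) + 18/5 * S) * sqnorm (lift_vertices h n) z"
proof (cases "h > 0 \<and> n > 0")
  case False
  then have "lift_vertices h n = {}" unfolding lift_vertices_def by auto
  then show ?thesis by (simp add: bilin_def sqnorm_def)
next
  case True
  then have hn: "h > 0" "n > 0" by auto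
  let ?V = "lift_vertices h n"
  let ?B = "18/5 * (4 * sqrt (real d) + 18/5 * S)"
  have ne: "?V \<noteq> {}" using hn unfolding lift_vertices_def by auto
  obtain \<mu> where mu: "0 \<le> \<mu>" "\<mu> \<le> 2 * real d" and muB: "\<And>z. \<bar>bilin ?V A z z\<bar> \<le> \<mu> * sqnorm ?V z"
    and approx: "\<And>e. e > 0 \<Longrightarrow> \<exists>x. sqnorm ?V x = 5/2 \<and> bilin ?V A x x \<ge> 5/2 * (\<mu> - e) \<or>
                                      sqnorm ?V x = 5/2 \<and> - bilin ?V A x x \<ge> 5/2 * (\<mu> - e)"
    using optimal_form_constant[OF finite_lift_vertices ne bilin_row_bound[OF sym row]] by blast
  have neg: "\<And>u v. - A u v = - A v u"
    "\<And>u. u \<in> ?V \<Longrightarrow> (\<Sum>v\<in>?V. \<bar>- A u v\<bar>) \<le> 2 * real d"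
    "\<And>z. z \<in> Zset h n d \<Longrightarrow> \<bar>restricted_form ?V (\<lambda>u v. - A u v) (Estar d) z z\<bar> \<le> S"
    "\<And>z. \<bar>bilin ?V (\<lambda>u v. - A u v) z z\<bar> \<le> \<mu> * sqnorm ?V z"
    using sym row SZ muB by (simp_all add: restricted_form_uminus bilin_uminus)
  have "\<mu> \<le> ?B"
  proof (rule le_if_le_plus_vanishing[of "8/5 * (5 + 11 * real d)"])
    fix \<theta> :: real assume th: "0 < \<theta>" "\<theta> \<le> 1"
    obtain x where nx: "sqnorm ?V x = 5/2" and
      "bilin ?V A x x \<ge> 5/2 * (\<mu> - \<theta>^2) \<or> bilin ?V (\<lambda>u v. - A u v) x x \<ge> 5/2 * (\<mu> - \<theta>^2)"
      using approx[of "\<theta>^2"] th by (auto simp: bilin_uminus)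
    then have "\<mu> \<le> ?B + 8/5 * \<theta> * (5 + 11 * real d)"
      using near_extremal_bound[OF hn d sym row SZ mu muB th nx]
        near_extremal_bound[OF hn d neg(1-3) mu neg(4) th nx] by blast
    then show "\<mu> \<le> ?B + 8/5 * (5 + 11 * real d) * \<theta>" by (simp add: algebra_simps)
  qed simp
  then show ?thesis
    using muB[of z] mult_right_mono[OF _ sqnorm_nonneg[of ?V z]] by (meson order_trans)
qed

lemma Nmat_sym:
  assumes "d_regular_graph h d E" "is_lift h n E G"
  shows "Nmat n E G u v = Nmat n E G v u"
proof -
  have "G u v = G v u" using assms(2) unfolding is_lift_def by blast
  moreover have "E (fst u) (fst v) = E (fst v) (fst u)" using assms(1) unfolding d_regular_graph_def by blast
  ultimately show ?thesis unfolding Nmat_def adjM_def Mbar_def by simp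
qed

lemma adjM_row_sum:
  assumes reg: "d_regular_graph h d E" and lift: "is_lift h n E G" and u: "u \<in> lift_vertices h n"
  shows "(\<Sum>v\<in>lift_vertices h n. adjM G u v) \<le> real d"
proof -
  obtain i j where uij: "u = (i, j)" and ih: "i < h" and jn: "j < n"
    using u unfolding lift_vertices_def by auto
  let ?B = "{v\<in>lift_vertices h n. G u v}"
  have "(\<Sum>v\<in>lift_vertices h n. adjM G u v) = real (card ?B)"
    unfolding adjM_def using finite_lift_vertices[of h n] by (simp add: sum.If_cases Int_def conj_commute)
  also have "card ?B \<le> card {i'. i' < h \<and> E i i'}"
  proof (rule card_inj_on_le)
    show "inj_on fst ?B"
    proof (rule inj_onI)
      fix a b assume a: "a \<in> ?B" and b: "b \<in> ?B" and ab: "fst a = fst b"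
      have Ga: "G (i, j) (fst a, snd a)" using a uij by simp
      have Gb: "G (i, j) (fst a, snd b)" using b ab uij by (metis (mono_tags) mem_Collect_eq prod.collapse)
      have "E i (fst a)" using Ga lift unfolding is_lift_def by blast
      then have "\<exists>!j'. j' < n \<and> G (i, j) (fst a, j')" using lift jn unfolding is_lift_def by blast
      moreover have "snd a < n" "snd b < n" using a b unfolding lift_vertices_def by auto
      ultimately have "snd a = snd b" using Ga Gb by blast
      then show "a = b" using ab by (simp add: prod_eq_iff)
    qed
    show "fst ` ?B \<subseteq> {i'. i' < h \<and> E i i'}"
    proof (rule image_subsetI)
      fix v assume v: "v \<in> ?B"
      then have "G (i, j) (fst v, snd v)" using uij by simp
      then have "E i (fst v)" using lift unfolding is_lift_def by blast
      moreover have "fst v < h" using v unfolding lift_vertices_def by (auto simp: mem_Times_iff)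
      ultimately show "fst v \<in> {i'. i' < h \<and> E i i'}" by simp
    qed
  qed simp
  also have "card {i'. i' < h \<and> E i i'} = d" using reg ih unfolding d_regular_graph_def by blast
  finally show ?thesis by simp
qed

lemma Mbar_row_sum:
  assumes reg: "d_regular_graph h d E" and u: "u \<in> lift_vertices h n"
  shows "(\<Sum>v\<in>lift_vertices h n. Mbar n E u v) = real d"
proof -
  obtain i j where uij: "u = (i, j)" and ih: "i < h" and jn: "j < n"
    using u unfolding lift_vertices_def by auto
  have "(\<Sum>v\<in>lift_vertices h n. Mbar n E u v) = (\<Sum>i'\<in>{0..<h}. \<Sum>j'\<in>{0..<n}. if E i i' then 1 / real n else 0)"
    unfolding lift_vertices_def Mbar_def uij by (simp add: sum.cartesian_product')
  also have "\<dots> = (\<Sum>i'\<in>{0..<h}. if E i i' then 1 else 0)"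
    using jn by (intro sum.cong) auto
  also have "\<dots> = real (card {i'. i' < h \<and> E i i'})"
    by (simp add: sum.If_cases Int_def conj_commute)
  also have "card {i'. i' < h \<and> E i i'} = d" using reg ih unfolding d_regular_graph_def by blast
  finally show ?thesis .
qed

lemma Nmat_row_sum:
  assumes reg: "d_regular_graph h d E" and lift: "is_lift h n E G" and u: "u \<in> lift_vertices h n"
  shows "(\<Sum>v\<in>lift_vertices h n. \<bar>Nmat n E G u v\<bar>) \<le> 2 * real d"
proof -
  have "(\<Sum>v\<in>lift_vertices h n. \<bar>Nmat n E G u v\<bar>) \<le> (\<Sum>v\<in>lift_vertices h n. adjM G u v + Mbar n E u v)"
  proof (rule sum_mono)
    fix v
    have "adjM G u v \<ge> 0" "Mbar n E u v \<ge> 0" unfolding adjM_def Mbar_def by auto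
    then show "\<bar>Nmat n E G u v\<bar> \<le> adjM G u v + Mbar n E u v" unfolding Nmat_def by linarith
  qed
  then show ?thesis
    unfolding sum.distrib using adjM_row_sum[OF reg lift u] Mbar_row_sum[OF reg u] by linarith
qed

lemma Mbar_new_space:
  assumes "x \<in> new_space h n"
  shows "(\<Sum>v\<in>lift_vertices h n. Mbar n E u v * x v) = 0"
proof -
  have "(\<Sum>v\<in>lift_vertices h n. Mbar n E u v * x v)
      = (\<Sum>i'\<in>{0..<h}. (if E (fst u) i' then 1 / real n else 0) * (\<Sum>v\<in>fibre n i'. x v))"
    unfolding lift_vertices_def fibre_def Mbar_def
    by (simp add: sum.cartesian_product' sum_distrib_left)
  also have "\<dots> = 0" using assms unfolding new_space_def by simp
  finally show ?thesis .
qed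

(* For a new eigenvector x with eigenvalue lam, x^T N x = lam |x|^2, since Mbar x = 0. *)
lemma new_eigenvector_form:
  assumes xs: "x \<in> new_space h n"
    and ev: "\<forall>u\<in>lift_vertices h n. mat_vec (lift_vertices h n) (adjM G) x u = lam * x u"
  shows "bilin (lift_vertices h n) (Nmat n E G) x x = lam * sqnorm (lift_vertices h n) x"
proof -
  let ?V = "lift_vertices h n"
  have "bilin ?V (Nmat n E G) x x = (\<Sum>u\<in>?V. x u * (mat_vec ?V (adjM G) x u - (\<Sum>v\<in>?V. Mbar n E u v * x v)))"
    unfolding bilin_def mat_vec_def Nmat_def
    by (simp add: sum_distrib_left sum_subtractf algebra_simps)
  also have "\<dots> = (\<Sum>u\<in>?V. lam * (x u)^2)"
    using ev Mbar_new_space[OF xs] by (intro sum.cong) (auto simp: power2_eq_square)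
  finally show ?thesis unfolding sqnorm_def by (simp add: sum_distrib_left)
qed

lemma lambda_star_le:
  assumes B: "B \<ge> 0"
    and bound: "\<And>x. \<bar>bilin (lift_vertices h n) (Nmat n E G) x x\<bar> \<le> B * sqnorm (lift_vertices h n) x"
  shows "lambda_star h n G \<le> B"
  unfolding lambda_star_def
proof (rule cSup_least)
  fix r assume "r \<in> insert 0 (abs ` new_eigenvalues h n G)"
  then consider "r = 0" | lam x v where "r = \<bar>lam\<bar>" "x \<in> new_space h n" "x v \<noteq> 0"
    "\<forall>u\<in>lift_vertices h n. mat_vec (lift_vertices h n) (adjM G) x u = lam * x u"
    unfolding new_eigenvalues_def by blast
  then show "r \<le> B"
  proof cases
    case 2
    let ?V = "lift_vertices h n"
    have "v \<in> ?V" using 2 unfolding new_space_def by blast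
    then have "sqnorm ?V x \<noteq> 0" using 2 sqnorm_eq_0D[OF finite_lift_vertices] by blast
    then have pos: "sqnorm ?V x > 0" using sqnorm_nonneg[of ?V x] by linarith
    have "\<bar>lam\<bar> * sqnorm ?V x \<le> B * sqnorm ?V x"
      using bound[of x] pos unfolding new_eigenvector_form[OF 2(2,4)] by (simp add: abs_mult)
    then show ?thesis using 2 pos by simp
  qed (use B in simp)
qed simp

(* The supremum defining the bound is finite: on Z the restricted form is at most 20 d. *)
lemma restricted_form_bdd_on_Z:
  assumes sym: "\<And>u v. A u v = A v u"
    and row: "\<And>u. u \<in> lift_vertices h n \<Longrightarrow> (\<Sum>v\<in>lift_vertices h n. \<bar>A u v\<bar>) \<le> 2 * real d"
  shows "bdd_above ((\<lambda>x. \<bar>restricted_form (lift_vertices h n) A (Estar d) x x\<bar>) ` Zset h n d)"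
proof (rule bdd_aboveI2)
  fix z assume "z \<in> Zset h n d"
  then have "sqnorm (lift_vertices h n) z \<le> 10" unfolding Zset_def sqnorm_def by auto
  then have "2 * real d * sqnorm (lift_vertices h n) z \<le> 2 * real d * 10"
    by (intro mult_left_mono) simp_all
  with restricted_form_row_bound[OF finite_lift_vertices sym row]
  show "\<bar>restricted_form (lift_vertices h n) A (Estar d) z z\<bar> \<le> 2 * real d * 10"
    by (rule order_trans)
qed

theorem proposition3p3:
  fixes h n d :: nat and E :: "nat \<Rightarrow> nat \<Rightarrow> bool"
    and G :: "nat \<times> nat \<Rightarrow> nat \<times> nat \<Rightarrow> bool"
  assumes "d \<ge> 2"
    and "d_regular_graph h d E"
    and "is_lift h n E G"
  shows "lambda_star h n G \<le>
           96 * (SUP x\<in>Zset h n d.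
                   \<bar>restricted_form (lift_vertices h n) (Nmat n E G) (Estar d) x x\<bar>)
           + 480 * sqrt (real d)"
proof -
  note d = assms(1) and reg = assms(2) and lift = assms(3)
  let ?V = "lift_vertices h n"
  define S where "S = (SUP x\<in>Zset h n d. \<bar>restricted_form ?V (Nmat n E G) (Estar d) x x\<bar>)"
  have sym: "\<And>u v. Nmat n E G u v = Nmat n E G v u" by (rule Nmat_sym[OF reg lift])
  have row: "\<And>u. u \<in> ?V \<Longrightarrow> (\<Sum>v\<in>?V. \<bar>Nmat n E G u v\<bar>) \<le> 2 * real d"
    by (rule Nmat_row_sum[OF reg lift])
  have SZ: "\<And>z. z \<in> Zset h n d \<Longrightarrow> \<bar>restricted_form ?V (Nmat n E G) (Estar d) z z\<bar> \<le> S"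
    unfolding S_def by (rule cSUP_upper[OF _ restricted_form_bdd_on_Z[OF sym row]])
  have S0: "S \<ge> 0" by (rule Z_bound_nonneg[OF SZ])
  have "lambda_star h n G \<le> 18/5 * (4 * sqrt (real d) + 18/5 * S)"
    using quadratic_form_bound[OF d sym row SZ] S0 by (intro lambda_star_le) simp_all
  also have "\<dots> \<le> 96 * S + 480 * sqrt (real d)" using S0 by simp
  finally show ?thesis unfolding S_def .
qed

end
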